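(* Let $r\ge 1$ be an integer, let $k_1,\dots,k_r$ be integers, and let $a,b>0$ with $ab\neq \pm 1$. Then for every integer $n\ge 0$, $$\mathbf{E}_{n}^{(k_1,\dots,k_r)}(a,b)=\sum_{i=0}^{n}\binom{n}{i} r^{n-i}(\ln a+\ln b)^i(\ln a)^{n-i}\,\mathbf{E}_{i}^{(k_1,\dots,k_r)} .$$
   Context: For integers $k_1,\dots,k_r$, the multi-polylogarithm is $Li_{(k_1,\dots,k_r)}(z)=\sum_{0<m_1<m_2<\dots<m_r}\frac{z^{m_r}}{m_1^{k_1}m_2^{k_2}\cdots m_r^{k_r}}$ (sum over integers). For $c>0$, $c^t:=e^{t\ln c}$. The Multi Poly-Euler polynomials $\mathbf{E}_n^{(k_1,\dots,k_r)}(x)$ are defined by $$\frac{2Li_{(k_1,\dots,k_r)}(1-e^{-t})}{(1+e^t)^r}e^{rxt}=\sum_{n=0}^{\infty}\mathbf{E}_{n}^{(k_1,\dots,k_r)}(x)\frac{t^n}{n!},$$ and the Multi Poly-Euler numbers are $\mathbf{E}_{n}^{(k_1,\dots,k_r)}:=\mathbf{E}_{n}^{(k_1,\dots,k_r)}(0)$. The generalized Multi Poly-Euler polynomials with parameters $a,b$ are defined by $$\frac{2Li_{(k_1,\dots,k_r)}(1-(ab)^{-t})}{(a^{-t}+b^t)^r}e^{rxt}=\sum_{n=0}^{\infty}\mathbf{E}_{n}^{(k_1,\dots,k_r)}(x;a,b)\frac{t^n}{n!},$$ and $\mathbf{E}_{n}^{(k_1,\dots,k_r)}(a,b):=\mathbf{E}_{n}^{(k_1,\dots,k_r)}(0;a,b)$.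 *)

theory Defs
  imports "HOL-Analysis.Analysis"
begin

definition mpl_index :: "nat \<Rightarrow> nat list set" where
  "mpl_index r = {ms. length ms = r \<and> sorted_wrt (<) ms \<and> (\<forall>m\<in>set ms. 0 < m)}"

definition multi_polylog :: "int list \<Rightarrow> real \<Rightarrow> real" where
  "multi_polylog ks z =
     infsum (\<lambda>ms. z ^ last ms / (\<Prod>i<length ks. real (ms ! i) powi (ks ! i)))
            (mpl_index (length ks))"

text \<open>Multi Poly-Euler polynomials: n-th Taylor coefficient (times n!) at t = 0.\<close>
definition multi_poly_euler_poly :: "int list \<Rightarrow> nat \<Rightarrow> real \<Rightarrow> real" where
  "multi_poly_euler_poly ks n x =
     (deriv ^^ n) (\<lambda>t. 2 * multi_polylog ks (1 - exp (- t)) / (1 + exp t) ^ length ks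
                        * exp (real (length ks) * x * t)) 0"

definition multi_poly_euler :: "int list \<Rightarrow> nat \<Rightarrow> real" where
  "multi_poly_euler ks n = multi_poly_euler_poly ks n 0"

definition gen_multi_poly_euler_poly :: "int list \<Rightarrow> nat \<Rightarrow> real \<Rightarrow> real \<Rightarrow> real \<Rightarrow> real" where
  "gen_multi_poly_euler_poly ks n x a b =
     (deriv ^^ n) (\<lambda>t. 2 * multi_polylog ks (1 - (a * b) powr (- t))
                        / (a powr (- t) + b powr t) ^ length ks
                        * exp (real (length ks) * x * t)) 0"

definition gen_multi_poly_euler :: "int list \<Rightarrow> nat \<Rightarrow> real \<Rightarrow> real \<Rightarrow> real" where
  "gen_multi_poly_euler ks n a b = gen_multi_poly_euler_poly ks n 0 a b"

end

theory Submission
  imports Defs "HOL-Complex_Analysis.Complex_Analysis" "HOL-Real_Asymp.Real_Asymp"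
begin

text \<open>
  Since c^t = exp (t ln c), we have a^(-t) + b^t = a^(-t) (1 + (ab)^t), so the generating
  function of E_n(a,b) is G(c t) exp (k t) with c = ln a + ln b, k = r ln a and G the
  generating function of E_n; the identity is Leibniz's rule for the n-th derivative of this
  product at 0. To justify differentiating, G is realised as the restriction of a holomorphic
  function: grouping the index tuples by their largest entry m writes the multi-polylogarithm
  as a power series whose m-th coefficient grows only polynomially in m, so it extends
  holomorphically to the unit disc.
\<close>

lemma sorted_wrt_less_le_last:
  fixes ms :: "'a::linorder list"
  assumes "sorted_wrt (<) ms" "x \<in> set ms"
  shows "x \<le> last ms"
  using assms by (induction ms rule: rev_induct) (auto simp: sorted_wrt_append less_imp_le)

lemma conv_radius_Suc_power: "conv_radius (\<lambda>n. real (Suc n) ^ N) = 1"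
proof (rule conv_radius_ratio_limit_nonzero)
  have "(\<lambda>n. (real (Suc n) / real (Suc (Suc n))) ^ N) \<longlonglongrightarrow> 1 ^ N"
    by (intro tendsto_power) real_asymp
  then show "(\<lambda>n. norm (real (Suc n) ^ N) / norm (real (Suc (Suc n)) ^ N)) \<longlonglongrightarrow> 1"
    by (simp only: norm_power norm_of_nat power_divide power_one)
qed simp_all

lemma summable_Suc_power_mult_geometric:
  fixes x :: real
  assumes "\<bar>x\<bar> < 1"
  shows "summable (\<lambda>n. real (Suc n) ^ N * x ^ n)"
proof (rule summable_in_conv_radius)
  show "ereal (norm x) < conv_radius (\<lambda>n. real (Suc n) ^ N)"
    using assms by (simp only: conv_radius_Suc_power) simp
qed

definition mpl_index_last :: "nat \<Rightarrow> nat \<Rightarrow> nat list set" where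
  "mpl_index_last r m = {ms \<in> mpl_index r. last ms = m}"

definition mpl_weight :: "int list \<Rightarrow> nat list \<Rightarrow> real" where
  "mpl_weight ks ms = 1 / (\<Prod>i<length ks. real (ms ! i) powi (ks ! i))"

definition mpl_coeff :: "int list \<Rightarrow> nat \<Rightarrow> real" where
  "mpl_coeff ks m = (\<Sum>ms\<in>mpl_index_last (length ks) m. mpl_weight ks ms)"

definition mpl_degree :: "int list \<Rightarrow> nat" where
  "mpl_degree ks = length ks + (\<Sum>i<length ks. nat \<bar>ks ! i\<bar>)"

lemma mpl_index_last_elem_bounds:
  assumes "ms \<in> mpl_index_last r m" "x \<in> set ms"
  shows "1 \<le> x" "x \<le> m"
  using assms sorted_wrt_less_le_last[of ms x]
  by (auto simp: mpl_index_last_def mpl_index_def Suc_le_eq)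

lemma mpl_index_last_subset_lists:
  "mpl_index_last r m \<subseteq> {ms. set ms \<subseteq> {..m} \<and> length ms = r}"
  using mpl_index_last_elem_bounds(2) by (fastforce simp: mpl_index_last_def mpl_index_def)

lemma finite_mpl_index_last: "finite (mpl_index_last r m)"
  by (rule finite_subset[OF mpl_index_last_subset_lists finite_lists_length_eq]) simp

lemma card_mpl_index_last_le: "card (mpl_index_last r m) \<le> Suc m ^ r"
proof -
  have "card (mpl_index_last r m) \<le> card {ms. set ms \<subseteq> {..m} \<and> length ms = r}"
    by (rule card_mono[OF finite_lists_length_eq mpl_index_last_subset_lists]) simp
  then show ?thesis by (simp add: card_lists_length_eq)
qed

lemma one_div_powi_le:
  fixes p q :: real
  assumes "1 \<le> p" "p \<le> q"
  shows "1 / p powi k \<le> q ^ nat \<bar>k\<bar>"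
proof (cases "k \<ge> 0")
  case True
  then obtain j where "k = int j" by (metis nonneg_int_cases)
  moreover have "1 / p ^ j \<le> 1" "1 \<le> q ^ j" using assms by simp_all
  ultimately show ?thesis by simp
next
  case False
  then obtain j where "k = - int j" by (metis linear nonpos_int_cases)
  moreover have "p ^ j \<le> q ^ j" using assms by (intro power_mono) auto
  ultimately show ?thesis by (simp add: power_int_minus divide_inverse)
qed

lemma abs_mpl_weight_le:
  assumes "ms \<in> mpl_index_last (length ks) m"
  shows "\<bar>mpl_weight ks ms\<bar> \<le> real (Suc m) ^ (\<Sum>i<length ks. nat \<bar>ks ! i\<bar>)"
proof -
  have len: "length ms = length ks"
    using assms by (simp add: mpl_index_last_def mpl_index_def)
  have entry: "1 \<le> real (ms ! i)" "real (ms ! i) \<le> real (Suc m)" if "i < length ks" for i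
    using mpl_index_last_elem_bounds[OF assms, of "ms ! i"] that len by simp_all
  have "\<bar>mpl_weight ks ms\<bar> = (\<Prod>i<length ks. 1 / real (ms ! i) powi (ks ! i))"
    using entry(1) by (simp add: mpl_weight_def prod_dividef abs_prod)
  also have "\<dots> \<le> (\<Prod>i<length ks. real (Suc m) ^ nat \<bar>ks ! i\<bar>)"
    using entry by (intro prod_mono) (auto intro: one_div_powi_le)
  also have "\<dots> = real (Suc m) ^ (\<Sum>i<length ks. nat \<bar>ks ! i\<bar>)"
    by (simp add: power_sum)
  finally show ?thesis .
qed

lemma sum_abs_mpl_weight_le:
  "(\<Sum>ms\<in>mpl_index_last (length ks) m. \<bar>mpl_weight ks ms\<bar>) \<le> real (Suc m) ^ mpl_degree ks"
proof -
  let ?K = "\<Sum>i<length ks. nat \<bar>ks ! i\<bar>"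
  have "(\<Sum>ms\<in>mpl_index_last (length ks) m. \<bar>mpl_weight ks ms\<bar>)
        \<le> (\<Sum>ms\<in>mpl_index_last (length ks) m. real (Suc m) ^ ?K)"
    by (intro sum_mono abs_mpl_weight_le)
  also have "\<dots> = real (card (mpl_index_last (length ks) m)) * real (Suc m) ^ ?K"
    by simp
  also have "\<dots> \<le> real (Suc m) ^ length ks * real (Suc m) ^ ?K"
    using card_mpl_index_last_le[of "length ks" m]
    by (intro mult_right_mono) (metis of_nat_le_iff of_nat_power, simp)
  also have "\<dots> = real (Suc m) ^ mpl_degree ks"
    by (simp add: mpl_degree_def power_add)
  finally show ?thesis .
qed

lemma abs_mpl_coeff_le: "\<bar>mpl_coeff ks m\<bar> \<le> real (Suc m) ^ mpl_degree ks"
  unfolding mpl_coeff_def using sum_abs_mpl_weight_le sum_abs order_trans by blast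

lemma sums_infsum_by_fibres:
  fixes f :: "'a \<Rightarrow> real" and \<phi> :: "'a \<Rightarrow> nat" and A :: "'a set"
  defines "B \<equiv> \<lambda>m. {x \<in> A. \<phi> x = m}"
  assumes fin: "\<And>m. finite (B m)" and abs: "summable (\<lambda>m. \<Sum>x\<in>B m. \<bar>f x\<bar>)"
  shows "(\<lambda>m. \<Sum>x\<in>B m. f x) sums infsum f A"
proof -
  let ?F = "\<lambda>p. f (snd p)"
  have bij: "bij_betw snd (Sigma UNIV B) A"
    by (rule bij_betw_byWitness[where f' = "\<lambda>x. (\<phi> x, x)"]) (auto simp: B_def)
  have "(\<lambda>m. \<Sum>x\<in>B m. \<bar>f x\<bar>) summable_on UNIV"
    using abs by (simp add: summable_on_UNIV_nonneg_real_iff)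
  then have "(\<lambda>p. norm (?F p)) summable_on Sigma UNIV B"
    by (intro summable_on_SigmaI[where g = "\<lambda>m. \<Sum>x\<in>B m. \<bar>f x\<bar>"]) (auto simp: fin)
  then obtain S where S: "(?F has_sum S) (Sigma UNIV B)"
    using abs_summable_summable summable_on_def by blast
  then have "(f has_sum S) A"
    using has_sum_reindex_bij_betw[OF bij] by blast
  then have "S = infsum f A"
    by (simp add: infsumI)
  have "((\<lambda>m. \<Sum>x\<in>B m. f x) has_sum S) UNIV"
    using S by (rule has_sum_SigmaD) (simp add: fin)
  then show ?thesis
    using \<open>S = infsum f A\<close> by (simp add: has_sum_imp_sums)
qed

lemma multi_polylog_sums:
  fixes x :: real
  assumes "\<bar>x\<bar> < 1"
  shows "(\<lambda>m. mpl_coeff ks m * x ^ m) sums multi_polylog ks x"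
proof -
  define f where "f = (\<lambda>ms. x ^ last ms / (\<Prod>i<length ks. real (ms ! i) powi (ks ! i)))"
  have fibres: "{ms \<in> mpl_index (length ks). last ms = m} = mpl_index_last (length ks) m" for m
    by (simp add: mpl_index_last_def)
  have f_on_fibre: "f ms = x ^ m * mpl_weight ks ms" if "ms \<in> mpl_index_last (length ks) m" for ms m
    using that by (simp add: f_def mpl_weight_def mpl_index_last_def)
  have bound: "(\<Sum>ms\<in>mpl_index_last (length ks) m. \<bar>f ms\<bar>) \<le> real (Suc m) ^ mpl_degree ks * \<bar>x\<bar> ^ m"
    for m
  proof -
    have "(\<Sum>ms\<in>mpl_index_last (length ks) m. \<bar>f ms\<bar>)
          = \<bar>x\<bar> ^ m * (\<Sum>ms\<in>mpl_index_last (length ks) m. \<bar>mpl_weight ks ms\<bar>)"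
      by (simp add: f_on_fibre abs_mult power_abs sum_distrib_left)
    also have "\<dots> \<le> \<bar>x\<bar> ^ m * real (Suc m) ^ mpl_degree ks"
      by (intro mult_left_mono sum_abs_mpl_weight_le) simp
    finally show ?thesis by (simp only: mult.commute)
  qed
  have "summable (\<lambda>m. real (Suc m) ^ mpl_degree ks * \<bar>x\<bar> ^ m)"
    using summable_Suc_power_mult_geometric[of "\<bar>x\<bar>"] assms by simp
  then have "summable (\<lambda>m. \<Sum>ms\<in>mpl_index_last (length ks) m. \<bar>f ms\<bar>)"
    by (rule summable_comparison_test') (simp add: sum_nonneg bound del: of_nat_Suc)
  then have "(\<lambda>m. \<Sum>ms\<in>mpl_index_last (length ks) m. f ms) sums infsum f (mpl_index (length ks))"
    using sums_infsum_by_fibres[where \<phi> = last and A = "mpl_index (length ks)" and f = f] finite_mpl_index_last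
    by (simp only: fibres)
  moreover have "(\<Sum>ms\<in>mpl_index_last (length ks) m. f ms) = mpl_coeff ks m * x ^ m" for m
    by (simp add: mpl_coeff_def f_on_fibre sum_distrib_left mult.commute)
  moreover have "infsum f (mpl_index (length ks)) = multi_polylog ks x"
    by (simp add: multi_polylog_def f_def)
  ultimately show ?thesis by simp
qed

definition cmulti_polylog :: "int list \<Rightarrow> complex \<Rightarrow> complex" where
  "cmulti_polylog ks z = (\<Sum>m. of_real (mpl_coeff ks m) * z ^ m)"

lemma summable_cmulti_polylog:
  fixes z :: complex
  assumes "norm z < 1"
  shows "summable (\<lambda>m. of_real (mpl_coeff ks m) * z ^ m)"
proof (rule summable_comparison_test')
  show "summable (\<lambda>m. real (Suc m) ^ mpl_degree ks * norm z ^ m)"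
    using summable_Suc_power_mult_geometric[of "norm z"] assms by simp
  show "norm (of_real (mpl_coeff ks m) * z ^ m) \<le> real (Suc m) ^ mpl_degree ks * norm z ^ m" for m
    using abs_mpl_coeff_le[of ks m]
    by (simp add: norm_mult norm_power mult_right_mono del: of_nat_Suc)
qed

lemma holomorphic_cmulti_polylog: "cmulti_polylog ks holomorphic_on ball 0 1"
proof -
  have "\<exists>f'. (cmulti_polylog ks has_field_derivative f') (at z)" if "norm z < 1" for z
    using termdiffs_strong'[of 1 "\<lambda>m. of_real (mpl_coeff ks m)" z] summable_cmulti_polylog that
    unfolding cmulti_polylog_def[abs_def] by blast
  then show ?thesis by (simp add: holomorphic_on_open)
qed

lemma cmulti_polylog_of_real:
  assumes "\<bar>x\<bar> < 1"
  shows "cmulti_polylog ks (of_real x) = of_real (multi_polylog ks x)"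
proof -
  have "(\<lambda>m. of_real (mpl_coeff ks m * x ^ m)) sums (of_real (multi_polylog ks x) :: complex)"
    using multi_polylog_sums[OF assms] by (simp only: sums_of_real_iff)
  then show ?thesis by (simp add: cmulti_polylog_def sums_iff)
qed

definition multi_poly_euler_gf :: "int list \<Rightarrow> real \<Rightarrow> real" where
  "multi_poly_euler_gf ks t = 2 * multi_polylog ks (1 - exp (- t)) / (1 + exp t) ^ length ks"

definition euler_gf_domain :: "complex set" where
  "euler_gf_domain = {z. norm (1 - exp (- z)) < 1 \<and> 1 + exp z \<noteq> 0}"

definition cmulti_poly_euler_gf :: "int list \<Rightarrow> complex \<Rightarrow> complex" where
  "cmulti_poly_euler_gf ks z = 2 * cmulti_polylog ks (1 - exp (- z)) / (1 + exp z) ^ length ks"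

lemma open_euler_gf_domain: "open euler_gf_domain"
  unfolding euler_gf_domain_def Collect_conj_eq
  by (intro open_Int open_Collect_less open_Collect_neq continuous_intros)

lemma zero_in_euler_gf_domain: "0 \<in> euler_gf_domain"
  by (simp add: euler_gf_domain_def)

lemma holomorphic_cmulti_poly_euler_gf: "cmulti_poly_euler_gf ks holomorphic_on euler_gf_domain"
proof -
  have "(cmulti_polylog ks \<circ> (\<lambda>z. 1 - exp (- z))) holomorphic_on euler_gf_domain"
    by (rule holomorphic_on_compose_gen[OF _ holomorphic_cmulti_polylog])
       (auto simp: euler_gf_domain_def intro!: holomorphic_intros)
  then show ?thesis
    unfolding cmulti_poly_euler_gf_def[abs_def]
    by (intro holomorphic_intros) (auto simp: euler_gf_domain_def o_def)
qed

lemma cmulti_poly_euler_gf_of_real: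
  assumes "of_real t \<in> euler_gf_domain"
  shows "cmulti_poly_euler_gf ks (of_real t) = of_real (multi_poly_euler_gf ks t)"
proof -
  have arg: "1 - exp (- of_real t) = (of_real (1 - exp (- t)) :: complex)"
    by (simp flip: exp_of_real)
  moreover have "\<bar>1 - exp (- t)\<bar> < 1"
    using assms arg unfolding euler_gf_domain_def by (metis mem_Collect_eq norm_of_real)
  ultimately have "cmulti_polylog ks (1 - exp (- of_real t)) = of_real (multi_polylog ks (1 - exp (- t)))"
    by (simp only: cmulti_polylog_of_real)
  then show ?thesis
    by (simp add: cmulti_poly_euler_gf_def multi_poly_euler_gf_def flip: exp_of_real)
qed

lemma higher_deriv_Re_of_real:
  assumes g: "g holomorphic_on S" and S: "open S"
    and fg: "\<And>t. of_real t \<in> S \<Longrightarrow> f t = Re (g (of_real t))"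
    and x: "of_real x \<in> S"
  shows "(deriv ^^ n) f x = Re ((deriv ^^ n) g (of_real x))"
  using x
proof (induction n arbitrary: x)
  case 0
  then show ?case using fg by simp
next
  case (Suc n)
  define U where "U = of_real -` S"
  have U: "open U"
    unfolding U_def by (intro open_vimage S continuous_intros)
  have x: "x \<in> U"
    using Suc.prems by (simp add: U_def)
  have "((\<lambda>t. Re ((deriv ^^ n) g (of_real t))) has_field_derivative
          Re (deriv ((deriv ^^ n) g) (of_real x))) (at x)"
    using Suc.prems
    by (intro has_field_derivative_Re has_vector_derivative_real_field
          holomorphic_derivI[OF holomorphic_higher_deriv[OF g S] S])
  then have "((deriv ^^ n) f has_field_derivative Re (deriv ((deriv ^^ n) g) (of_real x))) (at x)"
    by (rule has_field_derivative_transform_within_open[OF _ U x]) (simp add: U_def Suc.IH)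
  then show ?case by (simp add: DERIV_imp_deriv)
qed

lemma higher_deriv_exp_linear: "(deriv ^^ n) (\<lambda>z. exp (k * z)) (z :: complex) = k ^ n * exp (k * z)"
proof -
  have "deriv exp = (exp :: complex \<Rightarrow> complex)"
    by (intro ext DERIV_imp_deriv DERIV_exp)
  then have "(deriv ^^ n) exp = (exp :: complex \<Rightarrow> complex)" for n
    by (induction n) simp_all
  moreover have "(deriv ^^ n) (\<lambda>z. exp (k * z)) z = k ^ n * (deriv ^^ n) exp (k * z)"
    by (rule higher_deriv_compose_linear[where S = UNIV and T = UNIV]) (auto intro: holomorphic_intros)
  ultimately show ?thesis by simp
qed

lemma holomorphic_on_scaled:
  assumes "g holomorphic_on S"
  shows "(\<lambda>z. g (c * z)) holomorphic_on (\<lambda>z. c * z) -` S"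
  using holomorphic_on_compose_gen[OF _ assms, of "\<lambda>z. c * z"]
  by (auto simp: o_def intro: holomorphic_intros)

lemma higher_deriv_scale_mult_exp:
  fixes c k :: complex
  assumes g: "g holomorphic_on S" and S: "open S" "0 \<in> S"
  shows "(deriv ^^ n) (\<lambda>z. g (c * z) * exp (k * z)) 0
         = (\<Sum>i=0..n. of_nat (n choose i) * c ^ i * k ^ (n - i) * (deriv ^^ i) g 0)"
proof -
  define T where "T = (\<lambda>z. c * z) -` S"
  have T: "open T" "0 \<in> T"
    unfolding T_def using S by (intro open_vimage continuous_intros, simp_all)
  have gc: "(\<lambda>z. g (c * z)) holomorphic_on T"
    unfolding T_def using g by (rule holomorphic_on_scaled)
  have "(deriv ^^ n) (\<lambda>z. g (c * z) * exp (k * z)) 0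
        = (\<Sum>i=0..n. of_nat (n choose i) * (deriv ^^ i) (\<lambda>z. g (c * z)) 0
                     * (deriv ^^ (n - i)) (\<lambda>z. exp (k * z)) 0)"
    by (rule higher_deriv_mult[OF gc _ T]) (intro holomorphic_intros)
  also have "\<dots> = (\<Sum>i=0..n. of_nat (n choose i) * (c ^ i * (deriv ^^ i) g 0) * k ^ (n - i))"
    using higher_deriv_compose_linear[OF g T(1) S(1) T(2), of c]
    by (simp add: T_def higher_deriv_exp_linear)
  finally show ?thesis by (simp add: mult_ac)
qed

lemma multi_poly_euler_eq_Re_higher_deriv:
  "multi_poly_euler ks n = Re ((deriv ^^ n) (cmulti_poly_euler_gf ks) 0)"
proof -
  have "multi_poly_euler ks n = (deriv ^^ n) (multi_poly_euler_gf ks) 0"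
    by (simp add: multi_poly_euler_def multi_poly_euler_poly_def multi_poly_euler_gf_def[abs_def])
  also have "\<dots> = Re ((deriv ^^ n) (cmulti_poly_euler_gf ks) (of_real 0))"
    using holomorphic_cmulti_poly_euler_gf open_euler_gf_domain zero_in_euler_gf_domain
    by (intro higher_deriv_Re_of_real) (auto simp: cmulti_poly_euler_gf_of_real)
  finally show ?thesis by simp
qed

lemma gen_multi_poly_euler_gf_eq:
  fixes a b t :: real
  assumes "a > 0" "b > 0"
  shows "2 * multi_polylog ks (1 - (a * b) powr (- t)) / (a powr (- t) + b powr t) ^ length ks
           * exp (real (length ks) * 0 * t)
         = multi_poly_euler_gf ks ((ln a + ln b) * t) * exp (real (length ks) * ln a * t)"
proof -
  define s where "s = (ln a + ln b) * t"
  have "(a * b) powr (- t) = exp (- s)"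
    using assms by (simp add: s_def powr_def ln_mult)
  moreover have "a powr (- t) + b powr t = (1 + exp s) / exp (ln a * t)"
    using assms by (simp add: s_def powr_def field_simps flip: exp_add)
  moreover have "exp (ln a * t) ^ length ks = exp (real (length ks) * ln a * t)"
    by (simp add: mult.assoc flip: exp_of_nat_mult)
  ultimately show ?thesis
    by (simp add: multi_poly_euler_gf_def s_def power_divide)
qed

lemma gen_multi_poly_euler_eq_Re_higher_deriv:
  fixes ks :: "int list" and a b :: real
  defines "c \<equiv> ln a + ln b" and "k \<equiv> real (length ks) * ln a"
  assumes pos: "a > 0" "b > 0"
  shows "gen_multi_poly_euler ks n a b
         = Re ((deriv ^^ n) (\<lambda>z. cmulti_poly_euler_gf ks (of_real c * z) * exp (of_real k * z)) 0)"
proof -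
  define T where "T = (\<lambda>z. of_real c * z) -` euler_gf_domain"
  have T: "open T" "0 \<in> T"
    unfolding T_def using open_euler_gf_domain zero_in_euler_gf_domain
    by (intro open_vimage continuous_intros, simp_all)
  have holo: "(\<lambda>z. cmulti_poly_euler_gf ks (of_real c * z) * exp (of_real k * z)) holomorphic_on T"
    unfolding T_def
    by (intro holomorphic_intros holomorphic_on_scaled holomorphic_cmulti_poly_euler_gf)
  have real_part:
    "2 * multi_polylog ks (1 - (a * b) powr (- t)) / (a powr (- t) + b powr t) ^ length ks
       * exp (real (length ks) * 0 * t)
     = Re (cmulti_poly_euler_gf ks (of_real c * of_real t) * exp (of_real k * of_real t))"
    if "of_real t \<in> T" for t
  proof -
    have "of_real (c * t) \<in> euler_gf_domain"
      using that by (simp add: T_def)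
    then have "cmulti_poly_euler_gf ks (of_real c * of_real t)
               = of_real (multi_poly_euler_gf ks (c * t))"
      by (metis of_real_mult cmulti_poly_euler_gf_of_real)
    moreover have "exp (of_real k * of_real t) = (of_real (exp (k * t)) :: complex)"
      by (metis exp_of_real of_real_mult)
    ultimately show ?thesis
      using gen_multi_poly_euler_gf_eq[OF pos, of ks t]
      by (simp only: c_def k_def Re_complex_of_real flip: of_real_mult)
  qed
  have "gen_multi_poly_euler ks n a b
        = (deriv ^^ n) (\<lambda>t. 2 * multi_polylog ks (1 - (a * b) powr (- t))
             / (a powr (- t) + b powr t) ^ length ks * exp (real (length ks) * 0 * t)) 0"
    by (simp add: gen_multi_poly_euler_def gen_multi_poly_euler_poly_def)
  also have "\<dots> = Re ((deriv ^^ n) (\<lambda>z. cmulti_poly_euler_gf ks (of_real c * z)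
                                        * exp (of_real k * z)) (of_real 0))"
    using T by (intro higher_deriv_Re_of_real[OF holo] real_part) simp_all
  finally show ?thesis by simp
qed

theorem theorem2:
  fixes ks :: "int list" and a b :: real and n :: nat
  assumes "length ks \<ge> 1" and "a > 0" and "b > 0" and "a * b \<noteq> 1" and "a * b \<noteq> -1"
  shows "gen_multi_poly_euler ks n a b =
    (\<Sum>i=0..n. real (n choose i) * real (length ks) ^ (n - i) * (ln a + ln b) ^ i
               * (ln a) ^ (n - i) * multi_poly_euler ks i)"
proof -
  define c where "c = ln a + ln b"
  define k where "k = real (length ks) * ln a"
  have "gen_multi_poly_euler ks n a b
        = Re (\<Sum>i=0..n. of_nat (n choose i) * of_real c ^ i * of_real k ^ (n - i)
                         * (deriv ^^ i) (cmulti_poly_euler_gf ks) 0)"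
    unfolding gen_multi_poly_euler_eq_Re_higher_deriv[OF assms(2,3)] c_def k_def
    by (simp only: higher_deriv_scale_mult_exp[OF holomorphic_cmulti_poly_euler_gf
                     open_euler_gf_domain zero_in_euler_gf_domain])
  also have "\<dots> = (\<Sum>i=0..n. real (n choose i) * c ^ i * k ^ (n - i) * multi_poly_euler ks i)"
    by (simp add: Re_sum multi_poly_euler_eq_Re_higher_deriv flip: of_real_power)
  finally show ?thesis
    by (simp add: c_def k_def power_mult_distrib mult_ac)
qed

end
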